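(* Let $f=\sum_{U\in\mathbb P}\gamma_U x^U\in\mathbb C\{\{x\}\}_{\mathbb P}$ have radius of convergence $r=\operatorname{rad}(f)>0$ and let $a\in\mathbb C$ with $|a|<r$. For $n\ge0$ let $f_n=\sum_{U\in\mathbb P_n}\gamma_Ux^U$ and let $g_n$ denote $f_n$ written in the basis $\{(x-a)^T:T\in\mathbb P_n\}$. Then for every $T\in\mathbb P$ the sequence $(\langle g_n,(x-a)^T\rangle)_{n\ge0}$ converges in $\mathbb C$, and its limit is $$\gamma_T(a)=\sum_{U\in\mathbb P}\gamma_U\,(U/T)\,a^{\deg(U)-\deg(T)},$$ this series being convergent. The series $f_a:=\sum_{T\in\mathbb P}\gamma_T(a)(x-a)^T\in\mathbb C\{\{x-a\}\}_{\mathbb P}$ (the expansion of $f$ around $a$) has radius of convergence $\operatorname{rad}(f_a)\ge r-|a|$. In particular $\gamma_{\mathbf 1}(a)=\sum_U\gamma_Ua^{\deg U}$ and $\gamma_{|}(a)=\sum_{\deg U\ge1}\gamma_U\deg(U)a^{\deg(U)-1}$.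
   Context: Let $\mathbb P$ denote the set of finite planar reduced rooted trees (rooted trees in which the children of each vertex are linearly ordered and no vertex has exactly one child), including the empty tree $\mathbf 1$ and the one-vertex tree $|$. For $T\in\mathbb P$, $\deg(T)$ is the number of leaves and $L(T)$ its set of leaves; $\mathbb P_n=\{T:\deg T\le n\}$. The algebra $\mathbb C\{x\}_{\mathbb P}$ has basis $\{x^T:T\in\mathbb P\}$, $x^{\mathbf 1}=1$, $x^{|}=x$, with $k$-linear operations $\omega_k$ ($k\ge2$) defined by $\omega_k(x^{T_1},\dots,x^{T_k})=x^T$, $T$ obtained by attaching the nonempty $T_i$ in order as subtrees of the children of a new root (if exactly one $T_i$ is nonempty $T$ is that $T_i$; if all are empty, $T=\mathbf 1$). For $y$ in the algebra, $y^T$ is obtained by iterating these operations along $T$ starting from $y$ (with $y^{\mathbf 1}=1$); in particular $(x-a)^T$. The set $\{(x-a)^T:T\in\mathbb P_n\}$ is a basis of the span $\mathbb C\{x\}_{\le n}$ of $\{x^T:T\in\mathbb P_n\}$. $\mathbb C\{\{x-a\}\}_{\mathbb P}$ is the space of formal series $\sum_T\gamma_T(x-a)^T$ ($\gamma_T\in\mathbb C$), $\langle f,(x-a)^T\rangle$ the coefficient; $\mathbb C\{\{x\}\}_{\mathbb P}$ is the case $a=0$. The radius of convergence of $f=\sum_T\gamma_T(x-a)^T$ is $\operatorname{rad}(f)=\sup\{\rho\ge0:\sum_T|\gamma_T|\rho^{\deg T}<\infty\}\in[0,\infty]$. For $S\in\mathbb P$ and $I\subseteq L(S)$, the contraction $S|I\in\mathbb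 P$ is obtained from the subtree of $S$ consisting of all vertices on paths from the root to leaves in $I$ by suppressing every vertex having exactly one child ($S|\emptyset=\mathbf 1$, $S|I=|$ if $\#I=1$). The planar binomial coefficient is $(S/T)=\#\{I\subseteq L(S):S|I=T\}$. *)

theory Defs
  imports "HOL-Analysis.Analysis"
begin

text \<open>An element of the paper's set P is a value of
type ptree option: None is the empty tree 1, Some Lf is the one-vertex tree.\<close>

datatype ptree = Lf | Nd "ptree list"

fun reduced :: "ptree \<Rightarrow> bool" where
  "reduced Lf = True"
| "reduced (Nd ts) = (2 \<le> length ts \<and> (\<forall>t\<in>set ts. reduced t))"

definition Ptrees :: "ptree option set" where
  "Ptrees = insert None (Some ` {t. reduced t})"

fun nleaves :: "ptree \<Rightarrow> nat" where
  "nleaves Lf = 1"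
| "nleaves (Nd ts) = sum_list (map nleaves ts)"

definition deg :: "ptree option \<Rightarrow> nat" where
  "deg T = (case T of None \<Rightarrow> 0 | Some t \<Rightarrow> nleaves t)"

definition Pn :: "nat \<Rightarrow> ptree option set" where
  "Pn n = {T \<in> Ptrees. deg T \<le> n}"

text \<open>Leaves are identified with indices 0,...,deg T - 1 in left-to-right order.
Contraction S|I: keep the vertices on paths from the root to leaves in I and
suppress every vertex with exactly one child.\<close>

fun contr :: "ptree \<Rightarrow> nat set \<Rightarrow> ptree option"
and contrs :: "ptree list \<Rightarrow> nat set \<Rightarrow> ptree list" where
  "contr Lf I = (if 0 \<in> I then Some Lf else None)"
| "contr (Nd ts) I = (case contrs ts I of [] \<Rightarrow> None | [u] \<Rightarrow> Some u | us \<Rightarrow> Some (Nd us))"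
| "contrs [] I = []"
| "contrs (t # ts) I =
     (case contr t I of None \<Rightarrow> [] | Some u \<Rightarrow> [u]) @ contrs ts {j. j + nleaves t \<in> I}"

definition contraction :: "ptree option \<Rightarrow> nat set \<Rightarrow> ptree option" where
  "contraction S I = (case S of None \<Rightarrow> None | Some s \<Rightarrow> contr s I)"

definition pbinom :: "ptree option \<Rightarrow> ptree option \<Rightarrow> nat" where
  "pbinom S T = card {I. I \<subseteq> {..<deg S} \<and> contraction S I = T}"

text \<open>Elements are represented by their coefficient functions in the basis x^T.\<close>
type_synonym elt = "ptree option \<Rightarrow> complex"

definition mono :: "ptree option \<Rightarrow> elt" where
  "mono T = (\<lambda>U. if U = T then 1 else 0)"

definition supp :: "elt \<Rightarrow> ptree option set" where
  "supp p = {U. p U \<noteq> 0}"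

definition graft :: "ptree option list \<Rightarrow> ptree option" where
  "graft Ts = (case map the (filter (\<lambda>T. T \<noteq> None) Ts) of
                 [] \<Rightarrow> None | [t] \<Rightarrow> Some t | ts \<Rightarrow> Some (Nd ts))"

text \<open>Multilinear extension of omega_k(x^T1,...,x^Tk) = x^(graft [T1,...,Tk]).\<close>
definition omega :: "elt list \<Rightarrow> elt" where
  "omega ps = (\<lambda>T. \<Sum>Ts \<in> {Ts \<in> listset (map supp ps). graft Ts = T}.
                     prod_list (map2 (\<lambda>p U. p U) ps Ts))"

primrec tpow :: "elt \<Rightarrow> ptree \<Rightarrow> elt" where
  "tpow y Lf = y"
| "tpow y (Nd ts) = omega (map (tpow y) ts)"

definition epow :: "elt \<Rightarrow> ptree option \<Rightarrow> elt" where
  "epow y T = (case T of None \<Rightarrow> mono None | Some t \<Rightarrow> tpow y t)"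

definition xminus :: "complex \<Rightarrow> elt" where
  "xminus a = (\<lambda>U. mono (Some Lf) U - a * mono None U)"

definition expand_coeffs :: "complex \<Rightarrow> nat \<Rightarrow> elt \<Rightarrow> ptree option \<Rightarrow> complex" where
  "expand_coeffs a n p = (THE c. (\<forall>T. T \<notin> Pn n \<longrightarrow> c T = 0) \<and>
       (\<forall>U. p U = (\<Sum>T\<in>Pn n. c T * epow (xminus a) T U)))"

text \<open>A formal series sum_T gamma_T (x-a)^T is represented by gamma (values
outside Ptrees are irrelevant).\<close>
definition rad :: "(ptree option \<Rightarrow> complex) \<Rightarrow> ereal" where
  "rad \<gamma> = Sup (ereal ` {\<rho>. 0 \<le> \<rho> \<and> (\<lambda>T. norm (\<gamma> T) * \<rho> ^ deg T) summable_on Ptrees})"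

definition trunc :: "(ptree option \<Rightarrow> complex) \<Rightarrow> nat \<Rightarrow> elt" where
  "trunc \<gamma> n = (\<lambda>U. if U \<in> Pn n then \<gamma> U else 0)"

definition gamma_at :: "(ptree option \<Rightarrow> complex) \<Rightarrow> complex \<Rightarrow> ptree option \<Rightarrow> complex" where
  "gamma_at \<gamma> a T = (\<Sum>\<^sub>\<infinity>U\<in>Ptrees. \<gamma> U * of_nat (pbinom U T) * a ^ (deg U - deg T))"

end

theory Submission
  imports Defs
begin

(* Expanding x^U = ((x - a) + a)^U multilinearly along U gives the binomial formula
   x^U = sum over I \<subseteq> L(U) of a^(deg U - #I) (x - a)^(U|I), i.e.
   x^U = sum over T of (U/T) a^(deg U - deg T) (x - a)^T.
   Hence the coefficient of (x - a)^T in f_n is the partial sum over P_n of the series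
   defining gamma_T(a); it is the only possible one because the inverse change of basis
   (x - a)^T = sum over I of (-a)^(deg T - #I) x^(T|I) is unitriangular for the degree.
   Absolute convergence, and the bound on the radius, come from the same binomial identity
   with absolute values: sum over T of (U/T) rho^(deg T) |a|^(deg U - deg T) = (rho + |a|)^(deg U). *)

section \<open>Reduced trees and contraction\<close>

abbreviation nleavess :: "ptree list \<Rightarrow> nat" where
  "nleavess ts \<equiv> sum_list (map nleaves ts)"

lemma length_le_nleavess: "(\<And>t. t \<in> set ts \<Longrightarrow> 1 \<le> nleaves t) \<Longrightarrow> length ts \<le> nleavess ts"
  by (induction ts) fastforce+

lemma nleaves_ge_1: "reduced t \<Longrightarrow> 1 \<le> nleaves t"
proof (induction t)
  case (Nd ts)
  then have "length ts \<le> nleavess ts" by (intro length_le_nleavess) auto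
  with Nd.prems show ?case by simp
qed simp

lemma reduced_nleaves_eq_1_iff: "reduced t \<Longrightarrow> nleaves t = 1 \<longleftrightarrow> t = Lf"
proof (cases t)
  case (Nd ts)
  assume "reduced t"
  moreover from this have "length ts \<le> nleavess ts"
    using Nd by (intro length_le_nleavess) (use nleaves_ge_1 in fastforce)
  ultimately show ?thesis using Nd by simp
qed simp

lemma nleaves_child_less:
  assumes "t \<in> set ts" "\<And>s. s \<in> set ts \<Longrightarrow> 1 \<le> nleaves s" "2 \<le> length ts"
  shows "nleaves t < nleavess ts"
proof -
  have "nleavess ts = nleaves t + nleavess (remove1 t ts)"
    using assms(1) by (rule sum_list_map_remove1)
  moreover have "length (remove1 t ts) \<le> nleavess (remove1 t ts)"
    using assms(2) by (intro length_le_nleavess) (meson notin_set_remove1)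
  ultimately show ?thesis using assms(1,3) by (simp add: length_remove1)
qed

lemma finite_reduced_nleaves_le: "finite {t. reduced t \<and> nleaves t \<le> n}"
proof (induction n)
  case 0
  have "{t. reduced t \<and> nleaves t \<le> 0} = {}"
    using nleaves_ge_1 by fastforce
  then show ?case by (simp only: finite.emptyI)
next
  case (Suc n)
  let ?R = "{t. reduced t \<and> nleaves t \<le> n}"
  have "{t. reduced t \<and> nleaves t \<le> Suc n} \<subseteq> insert Lf (Nd ` {ts. set ts \<subseteq> ?R \<and> length ts \<le> Suc n})"
  proof
    fix t assume t: "t \<in> {t. reduced t \<and> nleaves t \<le> Suc n}"
    show "t \<in> insert Lf (Nd ` {ts. set ts \<subseteq> ?R \<and> length ts \<le> Suc n})"
    proof (cases t)
      case (Nd ts)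
      have ts: "\<And>s. s \<in> set ts \<Longrightarrow> 1 \<le> nleaves s" "2 \<le> length ts" "\<forall>s\<in>set ts. reduced s"
        using t Nd nleaves_ge_1 by auto
      have "length ts \<le> nleavess ts" using ts(1) by (rule length_le_nleavess)
      moreover have "set ts \<subseteq> ?R"
        using nleaves_child_less[OF _ ts(1,2)] ts(3) t Nd by fastforce
      ultimately show ?thesis using t Nd by auto
    qed simp
  qed
  moreover have "finite (Nd ` {ts. set ts \<subseteq> ?R \<and> length ts \<le> Suc n})"
    using Suc finite_lists_length_le by blast
  ultimately show ?case using finite_subset by blast
qed

lemma contr_cong:
  "\<forall>I'. (\<forall>i<nleaves t. i \<in> I \<longleftrightarrow> i \<in> I') \<longrightarrow> contr t I = contr t I'"
  "\<forall>I'. (\<forall>i<nleavess ts. i \<in> I \<longleftrightarrow> i \<in> I') \<longrightarrow> contrs ts I = contrs ts I'"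
proof (induction t I and ts I rule: contr_contrs.induct)
  case (4 t ts I)
  show ?case
  proof (intro allI impI)
    fix I' assume "\<forall>i<nleavess (t # ts). i \<in> I \<longleftrightarrow> i \<in> I'"
    then have "contr t I = contr t I'"
      and "contrs ts {j. j + nleaves t \<in> I} = contrs ts {j. j + nleaves t \<in> I'}"
      using "4.IH" by auto
    then show "contrs (t # ts) I = contrs (t # ts) I'" by simp
  qed
qed auto

lemma contr_reduced:
  "contr t I = Some u \<Longrightarrow> reduced u"
  "\<forall>u\<in>set (contrs ts I). reduced u"
proof (induction t I and ts I arbitrary: u and rule: contr_contrs.induct)
  case (1 I)
  then show ?case by (simp split: if_splits)
next
  case (2 ts I)
  then show ?case by (auto split: list.splits)
next
  case (4 t ts I)
  then show ?case by (auto split: option.splits)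
qed simp

lemma card_Int_lessThan_add:
  fixes I :: "nat set"
  shows "card (I \<inter> {..<n + m}) = card (I \<inter> {..<n}) + card ({j. j + n \<in> I} \<inter> {..<m})"
proof -
  have split: "I \<inter> {..<n + m} = (I \<inter> {..<n}) \<union> (\<lambda>j. j + n) ` ({j. j + n \<in> I} \<inter> {..<m})"
  proof (intro equalityI subsetI)
    fix x assume x: "x \<in> I \<inter> {..<n + m}"
    show "x \<in> (I \<inter> {..<n}) \<union> (\<lambda>j. j + n) ` ({j. j + n \<in> I} \<inter> {..<m})"
    proof (cases "x < n")
      case False
      then have "x = (x - n) + n" by simp
      moreover have "x - n \<in> {j. j + n \<in> I} \<inter> {..<m}" using x False by auto
      ultimately show ?thesis by blast
    qed (use x in auto)
  qed auto
  have "card ((\<lambda>j. j + n) ` ({j. j + n \<in> I} \<inter> {..<m})) = card ({j. j + n \<in> I} \<inter> {..<m})"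
    by (rule card_image) auto
  then show ?thesis unfolding split by (subst card_Un_disjoint) auto
qed

lemma deg_contr:
  "deg (contr t I) = card (I \<inter> {..<nleaves t})"
  "nleavess (contrs ts I) = card (I \<inter> {..<nleavess ts})"
proof (induction t I and ts I rule: contr_contrs.induct)
  case (1 I)
  then show ?case by (simp add: deg_def lessThan_Suc)
next
  case (2 ts I)
  then show ?case by (auto simp: deg_def split: list.splits)
next
  case (4 t ts I)
  have "nleavess (contrs (t # ts) I) = deg (contr t I) + nleavess (contrs ts {j. j + nleaves t \<in> I})"
    by (simp add: deg_def split: option.splits)
  also have "\<dots> = card (I \<inter> {..<nleaves t + nleavess ts})"
    using "4.IH" card_Int_lessThan_add by simp
  finally show ?case by simp
qed simp

lemma contr_all_leaves:
  "reduced t \<Longrightarrow> \<forall>i<nleaves t. i \<in> I \<Longrightarrow> contr t I = Some t"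
  "\<forall>t\<in>set ts. reduced t \<Longrightarrow> \<forall>i<nleavess ts. i \<in> I \<Longrightarrow> contrs ts I = ts"
proof (induction t I and ts I rule: contr_contrs.induct)
  case (2 ts I)
  then have "contrs ts I = ts" by simp
  with "2.prems"(1) show ?case by (cases ts rule: remdups_adj.cases) auto
qed simp_all

section \<open>Multilinearity of the grafting operations\<close>

abbreviation fin_supp :: "elt \<Rightarrow> bool" where
  "fin_supp p \<equiv> finite (supp p)"

definition coeff_prod :: "elt list \<Rightarrow> ptree option list \<Rightarrow> complex" where
  "coeff_prod ps Ts = prod_list (map2 (\<lambda>p U. p U) ps Ts)"

lemma coeff_prod_Nil [simp]: "coeff_prod [] [] = 1"
  and coeff_prod_Cons [simp]: "coeff_prod (p # ps) (V # Vs) = p V * coeff_prod ps Vs"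
  by (simp_all add: coeff_prod_def)

lemma coeff_prod_append:
  "length Ts = length ps \<Longrightarrow> coeff_prod (ps @ qs) (Ts @ Vs) = coeff_prod ps Ts * coeff_prod qs Vs"
  by (simp add: coeff_prod_def)

lemma length_listset: "Ts \<in> listset As \<Longrightarrow> length Ts = length As"
  by (induction As arbitrary: Ts) (auto simp: set_Cons_def)

lemma set_Cons_eq_image: "set_Cons A B = (\<lambda>(x, xs). x # xs) ` (A \<times> B)"
  by (auto simp: set_Cons_def)

lemma finite_listset: "\<forall>A\<in>set As. finite A \<Longrightarrow> finite (listset As)"
  by (induction As) (auto simp: set_Cons_eq_image)

lemma sum_set_Cons:
  assumes "finite A" "finite B"
  shows "sum f (set_Cons A B) = (\<Sum>x\<in>A. \<Sum>xs\<in>B. f (x # xs))"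
proof -
  have "inj_on (\<lambda>(x, xs). x # xs) (A \<times> B)" by (auto simp: inj_on_def)
  then have "sum f (set_Cons A B) = (\<Sum>(x, xs)\<in>A \<times> B. f (x # xs))"
    unfolding set_Cons_eq_image by (simp add: sum.reindex case_prod_unfold)
  then show ?thesis by (simp add: sum.cartesian_product)
qed

lemma sum_listset_append:
  assumes "\<forall>A\<in>set As. finite A" "\<forall>B\<in>set Bs. finite B"
  shows "sum f (listset (As @ Bs)) = (\<Sum>xs\<in>listset As. \<Sum>ys\<in>listset Bs. f (xs @ ys))"
  using assms(1)
proof (induction As arbitrary: f)
  case (Cons A As)
  have fin: "finite (listset (As @ Bs))" "finite (listset As)" "finite A"
    using Cons.prems assms(2) by (auto intro!: finite_listset)
  have "sum f (listset ((A # As) @ Bs)) = (\<Sum>x\<in>A. \<Sum>xs\<in>listset (As @ Bs). f (x # xs))"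
    using fin by (simp add: sum_set_Cons)
  also have "\<dots> = (\<Sum>x\<in>A. \<Sum>xs\<in>listset As. \<Sum>ys\<in>listset Bs. f (x # xs @ ys))"
    using Cons by simp
  also have "\<dots> = (\<Sum>xs\<in>listset (A # As). \<Sum>ys\<in>listset Bs. f (xs @ ys))"
    using fin by (simp add: sum_set_Cons)
  finally show ?case .
qed simp

lemma omega_eq_sum_listset:
  assumes "\<forall>p\<in>set ps. fin_supp p"
  shows "omega ps T = (\<Sum>Ts\<in>listset (map supp ps). if graft Ts = T then coeff_prod ps Ts else 0)"
  unfolding omega_def coeff_prod_def using assms
  by (intro sum.inter_filter finite_listset) auto

lemma omega_append_Cons:
  assumes "\<forall>q\<in>set ps. fin_supp q" "\<forall>q\<in>set qs. fin_supp q" "finite A" "supp p \<subseteq> A"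
  shows "omega (ps @ p # qs) T = (\<Sum>Ts\<in>listset (map supp ps). \<Sum>V\<in>A. \<Sum>Vs\<in>listset (map supp qs).
            if graft (Ts @ V # Vs) = T then coeff_prod ps Ts * p V * coeff_prod qs Vs else 0)"
proof -
  have fin: "fin_supp p" "\<forall>B\<in>set (map supp ps). finite B" "\<forall>B\<in>set (map supp qs). finite B"
    using assms finite_subset by auto
  have "omega (ps @ p # qs) T = (\<Sum>Ts\<in>listset (map supp (ps @ p # qs)).
          if graft Ts = T then coeff_prod (ps @ p # qs) Ts else 0)"
    by (rule omega_eq_sum_listset) (use assms fin in auto)
  also have "\<dots> = (\<Sum>Ts\<in>listset (map supp ps). \<Sum>V\<in>supp p. \<Sum>Vs\<in>listset (map supp qs).
          if graft (Ts @ V # Vs) = T then coeff_prod (ps @ p # qs) (Ts @ V # Vs) else 0)"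
    using fin by (simp add: sum_listset_append sum_set_Cons finite_listset)
  also have "\<dots> = (\<Sum>Ts\<in>listset (map supp ps). \<Sum>V\<in>supp p. \<Sum>Vs\<in>listset (map supp qs).
          if graft (Ts @ V # Vs) = T then coeff_prod ps Ts * p V * coeff_prod qs Vs else 0)"
    by (intro sum.cong refl) (simp add: coeff_prod_append length_listset)
  also have "\<dots> = (\<Sum>Ts\<in>listset (map supp ps). \<Sum>V\<in>A. \<Sum>Vs\<in>listset (map supp qs).
          if graft (Ts @ V # Vs) = T then coeff_prod ps Ts * p V * coeff_prod qs Vs else 0)"
    using assms(3,4) by (intro sum.cong refl sum.mono_neutral_left) (auto simp: supp_def cong: if_cong)
  finally show ?thesis .
qed

lemma supp_mono [simp]: "supp (mono V) = {V}"
  by (auto simp: supp_def mono_def)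

lemma omega_mono_middle:
  assumes "\<forall>q\<in>set ps. fin_supp q" "\<forall>q\<in>set qs. fin_supp q"
  shows "omega (ps @ mono V # qs) T = (\<Sum>Ts\<in>listset (map supp ps). \<Sum>Vs\<in>listset (map supp qs).
            if graft (Ts @ V # Vs) = T then coeff_prod ps Ts * coeff_prod qs Vs else 0)"
proof -
  have "mono V V = 1" by (simp add: mono_def)
  then show ?thesis
    using omega_append_Cons[OF assms, of "{V}" "mono V" T] by (simp cong: if_cong)
qed

lemma omega_expand_middle:
  assumes "\<forall>q\<in>set ps. fin_supp q" "\<forall>q\<in>set qs. fin_supp q" "finite A" "supp p \<subseteq> A"
  shows "omega (ps @ p # qs) T = (\<Sum>V\<in>A. p V * omega (ps @ mono V # qs) T)"
proof -
  have "omega (ps @ p # qs) T = (\<Sum>V\<in>A. \<Sum>Ts\<in>listset (map supp ps). \<Sum>Vs\<in>listset (map supp qs).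
          p V * (if graft (Ts @ V # Vs) = T then coeff_prod ps Ts * coeff_prod qs Vs else 0))"
    unfolding omega_append_Cons[OF assms] by (subst sum.swap) (intro sum.cong refl, auto)
  then show ?thesis by (simp add: omega_mono_middle[OF assms(1,2)] sum_distrib_left)
qed

lemma supp_lincomb: "supp (\<lambda>U. \<Sum>k\<in>K. c k * q k U) \<subseteq> (\<Union>k\<in>K. supp (q k))"
proof
  fix U assume "U \<in> supp (\<lambda>U. \<Sum>k\<in>K. c k * q k U)"
  then obtain k where "k \<in> K" "c k * q k U \<noteq> 0"
    by (metis (mono_tags, lifting) mem_Collect_eq supp_def sum.neutral)
  then show "U \<in> (\<Union>k\<in>K. supp (q k))" by (auto simp: supp_def)
qed

lemma omega_lincomb_middle:
  assumes "\<forall>q\<in>set ps. fin_supp q" "\<forall>q\<in>set qs. fin_supp q" "finite K" "\<forall>k\<in>K. fin_supp (q k)"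
  shows "omega (ps @ (\<lambda>U. \<Sum>k\<in>K. c k * q k U) # qs) T = (\<Sum>k\<in>K. c k * omega (ps @ q k # qs) T)"
proof -
  let ?A = "\<Union>k\<in>K. supp (q k)"
  have "finite ?A" using assms by auto
  then have "omega (ps @ (\<lambda>U. \<Sum>k\<in>K. c k * q k U) # qs) T
      = (\<Sum>V\<in>?A. (\<Sum>k\<in>K. c k * q k V) * omega (ps @ mono V # qs) T)"
    by (rule omega_expand_middle[OF assms(1,2) _ supp_lincomb])
  also have "\<dots> = (\<Sum>k\<in>K. c k * (\<Sum>V\<in>?A. q k V * omega (ps @ mono V # qs) T))"
    by (simp add: sum_distrib_left sum_distrib_right mult.assoc) (rule sum.swap)
  also have "\<dots> = (\<Sum>k\<in>K. c k * omega (ps @ q k # qs) T)"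
    using assms \<open>finite ?A\<close>
    by (intro sum.cong refl arg_cong2[where f = "(*)"] omega_expand_middle[symmetric]) auto
  finally show ?thesis .
qed

lemma omega_mono_None_middle:
  assumes "\<forall>q\<in>set ps. fin_supp q" "\<forall>q\<in>set qs. fin_supp q"
  shows "omega (ps @ mono None # qs) = omega (ps @ qs)"
proof
  fix T
  have fin: "\<forall>B\<in>set (map supp ps). finite B" "\<forall>B\<in>set (map supp qs). finite B"
    using assms by auto
  have "omega (ps @ qs) T = (\<Sum>Ts\<in>listset (map supp (ps @ qs)).
          if graft Ts = T then coeff_prod (ps @ qs) Ts else 0)"
    by (rule omega_eq_sum_listset) (use assms in auto)
  also have "\<dots> = (\<Sum>Ts\<in>listset (map supp ps). \<Sum>Vs\<in>listset (map supp qs).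
          if graft (Ts @ Vs) = T then coeff_prod (ps @ qs) (Ts @ Vs) else 0)"
    using fin by (simp add: sum_listset_append)
  also have "\<dots> = (\<Sum>Ts\<in>listset (map supp ps). \<Sum>Vs\<in>listset (map supp qs).
          if graft (Ts @ None # Vs) = T then coeff_prod ps Ts * coeff_prod qs Vs else 0)"
    by (intro sum.cong refl) (simp add: graft_def coeff_prod_append length_listset cong: if_cong)
  also have "\<dots> = omega (ps @ mono None # qs) T"
    by (rule omega_mono_middle[OF assms, symmetric])
  finally show "omega (ps @ mono None # qs) T = omega (ps @ qs) T" by simp
qed

lemma graft_singleton [simp]: "graft [V] = V"
  by (cases V) (auto simp: graft_def)

lemma omega_singleton: "fin_supp p \<Longrightarrow> omega [p] = p"
proof
  fix T assume fin: "fin_supp p"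
  have "omega ([] @ p # []) T = (\<Sum>Ts\<in>listset (map supp []). \<Sum>V\<in>supp p. \<Sum>Vs\<in>listset (map supp []).
          if graft (Ts @ V # Vs) = T then coeff_prod [] Ts * p V * coeff_prod [] Vs else 0)"
    by (rule omega_append_Cons) (use fin in auto)
  also have "\<dots> = (\<Sum>V\<in>supp p. if V = T then p V else 0)"
    by (simp cong: if_cong)
  also have "\<dots> = p T"
    using fin by (auto simp: sum.delta' supp_def)
  finally show "omega [p] T = p T" by simp
qed

lemma omega_Nil: "omega [] = mono None"
proof
  fix T
  have "{Ts \<in> listset (map supp []). graft Ts = T} = (if T = None then {[]} else {})"
    by (auto simp: graft_def)
  then show "omega [] T = mono None T"
    unfolding omega_def by (simp add: mono_def)
qed

lemma listset_map_singleton: "listset (map (\<lambda>V. {V}) Vs) = {Vs}"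
  by (induction Vs) (auto simp: set_Cons_def)

lemma omega_map_mono: "omega (map mono Vs) = mono (graft Vs)"
proof
  fix T
  have "map supp (map mono Vs) = map (\<lambda>V. {V}) Vs" by simp
  moreover have prod: "prod_list (map2 (\<lambda>p U. p U) (map mono Vs) Vs) = 1"
    by (induction Vs) (auto simp: mono_def)
  ultimately have "{Ts \<in> listset (map supp (map mono Vs)). graft Ts = T} =
      (if graft Vs = T then {Vs} else {})"
    by (simp only: listset_map_singleton) auto
  then show "omega (map mono Vs) T = mono (graft Vs) T"
    unfolding omega_def using prod by (simp add: mono_def)
qed

lemma finite_supp_omega: "\<forall>p\<in>set ps. fin_supp p \<Longrightarrow> fin_supp (omega ps)"
proof -
  assume fin: "\<forall>p\<in>set ps. fin_supp p"
  have "supp (omega ps) \<subseteq> graft ` listset (map supp ps)"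
  proof
    fix T assume "T \<in> supp (omega ps)"
    then have "(\<Sum>Ts\<in>{Ts \<in> listset (map supp ps). graft Ts = T}. prod_list (map2 (\<lambda>p U. p U) ps Ts)) \<noteq> 0"
      by (simp add: supp_def omega_def)
    then obtain Ts where "Ts \<in> {Ts \<in> listset (map supp ps). graft Ts = T}"
      by (meson sum.neutral)
    then show "T \<in> graft ` listset (map supp ps)" by blast
  qed
  moreover have "finite (listset (map supp ps))" using fin by (intro finite_listset) auto
  ultimately show ?thesis by (meson finite_imageI finite_subset)
qed

lemma finite_supp_tpow: "fin_supp y \<Longrightarrow> fin_supp (tpow y t)"
  by (induction t) (auto intro!: finite_supp_omega)

lemma finite_supp_epow: "fin_supp y \<Longrightarrow> fin_supp (epow y T)"
  by (cases T) (auto simp: epow_def finite_supp_tpow)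

section \<open>The binomial expansion of (y + a)^T\<close>

lemma sum_Pow_lessThan_add:
  "(\<Sum>I\<in>Pow {..<n + m}. G I) = (\<Sum>J\<in>Pow {..<n::nat}. \<Sum>K\<in>Pow {..<m}. G (J \<union> (\<lambda>k. k + n) ` K))"
proof -
  have "(\<Sum>I\<in>Pow {..<n + m}. G I) = (\<Sum>(J, K)\<in>Pow {..<n} \<times> Pow {..<m}. G (J \<union> (\<lambda>k. k + n) ` K))"
  proof (rule sum.reindex_bij_witness[where j = "\<lambda>I. (I \<inter> {..<n}, {k. k + n \<in> I})"
        and i = "\<lambda>(J, K). J \<union> (\<lambda>k. k + n) ` K"])
    fix I assume I: "I \<in> Pow {..<n + m}"
    have "I \<subseteq> (I \<inter> {..<n}) \<union> (\<lambda>k. k + n) ` {k. k + n \<in> I}"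
    proof
      fix x assume "x \<in> I"
      then show "x \<in> (I \<inter> {..<n}) \<union> (\<lambda>k. k + n) ` {k. k + n \<in> I}"
        by (cases "x < n") (auto intro!: image_eqI[of _ _ "x - n"])
    qed
    then show "(case (I \<inter> {..<n}, {k. k + n \<in> I}) of (J, K) \<Rightarrow> J \<union> (\<lambda>k. k + n) ` K) = I"
      by auto
    then show "(case (I \<inter> {..<n}, {k. k + n \<in> I}) of (J, K) \<Rightarrow> G (J \<union> (\<lambda>k. k + n) ` K)) = G I"
      by (simp add: case_prod_unfold)
    show "(I \<inter> {..<n}, {k. k + n \<in> I}) \<in> Pow {..<n} \<times> Pow {..<m}"
      using I by auto
  next
    fix JK assume "JK \<in> Pow {..<n} \<times> Pow {..<m}"
    moreover obtain J K where "JK = (J, K)" by force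
    ultimately show "(case JK of (J, K) \<Rightarrow> J \<union> (\<lambda>k. k + n) ` K) \<in> Pow {..<n + m}"
      and "((case JK of (J, K) \<Rightarrow> J \<union> (\<lambda>k. k + n) ` K) \<inter> {..<n},
            {k. k + n \<in> (case JK of (J, K) \<Rightarrow> J \<union> (\<lambda>k. k + n) ` K)}) = JK"
      by auto
  qed
  then show ?thesis by (simp add: sum.cartesian_product)
qed

lemma card_le_of_subset_lessThan: "I \<subseteq> {..<n} \<Longrightarrow> card I \<le> n"
  by (metis card_lessThan card_mono finite_lessThan)

lemma card_Un_image_add:
  assumes "J \<subseteq> {..<n::nat}" "finite K"
  shows "card (J \<union> (\<lambda>k. k + n) ` K) = card J + card K"
proof -
  have "finite J" using assms(1) finite_subset by blast
  then have "card (J \<union> (\<lambda>k. k + n) ` K) = card J + card ((\<lambda>k. k + n) ` K)"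
    using assms by (intro card_Un_disjoint) auto
  also have "card ((\<lambda>k. k + n) ` K) = card K" by (rule card_image) auto
  finally show ?thesis .
qed

lemma contrs_Cons_Un_image_add:
  assumes "J \<subseteq> {..<nleaves t}"
  shows "contrs (t # ts) (J \<union> (\<lambda>k. k + nleaves t) ` K)
           = (case contr t J of None \<Rightarrow> [] | Some u \<Rightarrow> [u]) @ contrs ts K"
proof -
  have "\<forall>i<nleaves t. i \<in> J \<longleftrightarrow> i \<in> J \<union> (\<lambda>k. k + nleaves t) ` K" by auto
  then have "contr t (J \<union> (\<lambda>k. k + nleaves t) ` K) = contr t J"
    using contr_cong(1) by metis
  moreover have "{j. j + nleaves t \<in> J \<union> (\<lambda>k. k + nleaves t) ` K} = K"
    using assms by auto
  ultimately show ?thesis by simp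
qed

lemma sum_Pow_nleavess_Cons:
  fixes a :: "'a::comm_semiring_1"
  shows "(\<Sum>I\<in>Pow {..<nleavess (t # ts)}. a ^ (nleavess (t # ts) - card I) * G (contrs (t # ts) I))
    = (\<Sum>J\<in>Pow {..<nleaves t}. \<Sum>K\<in>Pow {..<nleavess ts}. a ^ (nleaves t - card J) * a ^ (nleavess ts - card K)
         * G ((case contr t J of None \<Rightarrow> [] | Some u \<Rightarrow> [u]) @ contrs ts K))"
  unfolding sum_list.Cons list.map sum_Pow_lessThan_add
proof (intro sum.cong refl)
  fix J K assume J: "J \<in> Pow {..<nleaves t}" and K: "K \<in> Pow {..<nleavess ts}"
  then have "card J \<le> nleaves t" "card K \<le> nleavess ts" "finite K"
    using finite_subset by (auto intro: card_le_of_subset_lessThan)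
  moreover have "card (J \<union> (\<lambda>k. k + nleaves t) ` K) = card J + card K"
    using J \<open>finite K\<close> by (intro card_Un_image_add) auto
  ultimately have "nleaves t + nleavess ts - card (J \<union> (\<lambda>k. k + nleaves t) ` K)
      = (nleaves t - card J) + (nleavess ts - card K)"
    by simp
  then show "a ^ (nleaves t + nleavess ts - card (J \<union> (\<lambda>k. k + nleaves t) ` K))
        * G (contrs (t # ts) (J \<union> (\<lambda>k. k + nleaves t) ` K))
      = a ^ (nleaves t - card J) * a ^ (nleavess ts - card K)
        * G ((case contr t J of None \<Rightarrow> [] | Some u \<Rightarrow> [u]) @ contrs ts K)"
    using J by (simp only: power_add contrs_Cons_Un_image_add PowD)
qed

definition plus_const :: "elt \<Rightarrow> complex \<Rightarrow> elt" where
  "plus_const y a = (\<lambda>V. y V + a * mono None V)"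

lemma finite_supp_plus_const:
  assumes "fin_supp y"
  shows "fin_supp (plus_const y a)"
proof (rule finite_subset)
  show "supp (plus_const y a) \<subseteq> insert None (supp y)"
    by (auto simp: supp_def mono_def plus_const_def)
qed (use assms in simp)

lemma omega_epow_middle:
  assumes "fin_supp y" "\<forall>q\<in>set ps. fin_supp q" "\<forall>q\<in>set qs. fin_supp q"
  shows "omega (ps @ epow y W # qs)
           = omega (ps @ map (tpow y) (case W of None \<Rightarrow> [] | Some u \<Rightarrow> [u]) @ qs)"
proof (cases W)
  case None
  then show ?thesis using omega_mono_None_middle[OF assms(2,3)] by (simp add: epow_def)
qed (simp add: epow_def)

lemma omega_map_tpow:
  assumes "fin_supp y"
  shows "omega (map (tpow y) us) = epow y (case us of [] \<Rightarrow> None | [u] \<Rightarrow> Some u | us \<Rightarrow> Some (Nd us))"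
proof (cases us rule: remdups_adj.cases)
  case 1 then show ?thesis by (simp add: omega_Nil epow_def)
next
  case (2 u) then show ?thesis by (simp add: omega_singleton finite_supp_tpow assms epow_def)
next
  case (3 u v us) then show ?thesis by (simp add: epow_def)
qed

lemma omega_sum_epow_contr_middle:
  assumes "fin_supp y" "\<forall>p\<in>set ps. fin_supp p" "\<forall>q\<in>set qs. fin_supp q"
  shows "omega (ps @ (\<lambda>V. \<Sum>J\<in>Pow {..<nleaves t}. a ^ (nleaves t - card J) * epow y (contr t J) V) # qs) V
    = (\<Sum>J\<in>Pow {..<nleaves t}. a ^ (nleaves t - card J) *
         omega (ps @ map (tpow y) (case contr t J of None \<Rightarrow> [] | Some u \<Rightarrow> [u]) @ qs) V)"
proof -
  have "omega (ps @ (\<lambda>V. \<Sum>J\<in>Pow {..<nleaves t}. a ^ (nleaves t - card J) * epow y (contr t J) V) # qs) V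
      = (\<Sum>J\<in>Pow {..<nleaves t}. a ^ (nleaves t - card J) * omega (ps @ epow y (contr t J) # qs) V)"
    using assms by (intro omega_lincomb_middle) (auto intro: finite_supp_epow)
  then show ?thesis by (simp only: omega_epow_middle[OF assms])
qed

lemma omega_map_tpow_plus_const:
  assumes fin_y: "fin_supp y"
    and tpow_t: "\<forall>t\<in>set ts. tpow (plus_const y a) t =
        (\<lambda>V. \<Sum>I\<in>Pow {..<nleaves t}. a ^ (nleaves t - card I) * epow y (contr t I) V)"
    and fin_ps: "\<forall>p\<in>set ps. fin_supp p"
  shows "omega (ps @ map (tpow (plus_const y a)) ts) V =
     (\<Sum>I\<in>Pow {..<nleavess ts}. a ^ (nleavess ts - card I) * omega (ps @ map (tpow y) (contrs ts I)) V)"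
  using tpow_t fin_ps
proof (induction ts arbitrary: ps)
  case (Cons t ts)
  let ?z = "plus_const y a" and ?R = "\<lambda>K. map (tpow y) (contrs ts K)"
  let ?opt = "\<lambda>J. case contr t J of None \<Rightarrow> [] | Some u \<Rightarrow> [u]"
  have fin_R: "\<forall>q\<in>set (?R K). fin_supp q" for K
    using finite_supp_tpow fin_y by auto
  have fin_z: "\<forall>p\<in>set (ps @ [tpow ?z t]). fin_supp p"
    using Cons.prems(2) finite_supp_tpow finite_supp_plus_const[OF fin_y] by auto
  have tpow_z: "tpow ?z t = (\<lambda>V. \<Sum>J\<in>Pow {..<nleaves t}. a ^ (nleaves t - card J) * epow y (contr t J) V)"
    using Cons.prems(1) by simp
  have "omega (ps @ map (tpow ?z) (t # ts)) V = omega ((ps @ [tpow ?z t]) @ map (tpow ?z) ts) V"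
    by simp
  also have "\<dots> = (\<Sum>K\<in>Pow {..<nleavess ts}. a ^ (nleavess ts - card K) * omega ((ps @ [tpow ?z t]) @ ?R K) V)"
    by (rule Cons.IH) (use Cons.prems(1) fin_z in auto)
  also have "\<dots> = (\<Sum>K\<in>Pow {..<nleavess ts}. a ^ (nleavess ts - card K) *
      (\<Sum>J\<in>Pow {..<nleaves t}. a ^ (nleaves t - card J) * omega (ps @ map (tpow y) (?opt J @ contrs ts K)) V))"
    unfolding tpow_z append_assoc append.simps
    by (simp only: omega_sum_epow_contr_middle[OF fin_y Cons.prems(2) fin_R] map_append)
  also have "\<dots> = (\<Sum>J\<in>Pow {..<nleaves t}. \<Sum>K\<in>Pow {..<nleavess ts}.
      a ^ (nleaves t - card J) * a ^ (nleavess ts - card K) * omega (ps @ map (tpow y) (?opt J @ contrs ts K)) V)"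
    by (subst sum.swap) (simp only: sum_distrib_left mult.assoc mult.left_commute)
  also have "\<dots> = (\<Sum>I\<in>Pow {..<nleavess (t # ts)}. a ^ (nleavess (t # ts) - card I) *
      omega (ps @ map (tpow y) (contrs (t # ts) I)) V)"
    by (rule sum_Pow_nleavess_Cons[symmetric])
  finally show ?case .
qed simp

lemma tpow_plus_const:
  assumes "fin_supp y"
  shows "tpow (plus_const y a) t = (\<lambda>V. \<Sum>I\<in>Pow {..<nleaves t}. a ^ (nleaves t - card I) * epow y (contr t I) V)"
proof (induction t)
  case Lf
  have "Pow {..<Suc 0} = {{}, {0}}" by (auto simp: lessThan_Suc)
  then show ?case by (intro ext) (simp add: epow_def plus_const_def)
next
  case (Nd ts)
  have "omega ([] @ map (tpow (plus_const y a)) ts) V =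
      (\<Sum>I\<in>Pow {..<nleavess ts}. a ^ (nleavess ts - card I) * omega ([] @ map (tpow y) (contrs ts I)) V)" for V
    by (rule omega_map_tpow_plus_const[OF assms]) (use Nd.IH in auto)
  then show ?case by (simp add: omega_map_tpow[OF assms] fun_eq_iff)
qed

lemma epow_plus_const:
  assumes "fin_supp y"
  shows "epow (plus_const y a) T = (\<lambda>V. \<Sum>I\<in>Pow {..<deg T}. a ^ (deg T - card I) * epow y (contraction T I) V)"
  using tpow_plus_const[OF assms] by (cases T) (simp_all add: epow_def deg_def contraction_def)

section \<open>Change of basis between x^T and (x - a)^T\<close>

lemma Some_in_Ptrees_iff: "Some t \<in> Ptrees \<longleftrightarrow> reduced t"
  by (auto simp: Ptrees_def)

lemma Pn_subset_Ptrees: "Pn n \<subseteq> Ptrees"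
  by (auto simp: Pn_def)

lemma finite_Pn: "finite (Pn n)"
proof (rule finite_subset)
  show "Pn n \<subseteq> insert None (Some ` {t. reduced t \<and> nleaves t \<le> n})"
    by (auto simp: Pn_def Ptrees_def deg_def)
qed (simp add: finite_reduced_nleaves_le)

lemma deg_ge_1: "T \<in> Ptrees \<Longrightarrow> T \<noteq> None \<Longrightarrow> 1 \<le> deg T"
  by (cases T) (auto simp: deg_def Some_in_Ptrees_iff dest: nleaves_ge_1)

lemma deg_eq_1_iff:
  assumes "T \<in> Ptrees"
  shows "deg T = 1 \<longleftrightarrow> T = Some Lf"
proof (cases T)
  case (Some t)
  then have "reduced t" using assms Some_in_Ptrees_iff by blast
  then show ?thesis using Some reduced_nleaves_eq_1_iff by (simp add: deg_def)
qed (simp add: deg_def)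

lemma contraction_in_Ptrees: "contraction T I \<in> Ptrees"
proof (cases "contraction T I")
  case (Some u)
  then obtain t where "contr t I = Some u"
    by (auto simp: contraction_def split: option.splits)
  then show ?thesis using Some contr_reduced(1) Some_in_Ptrees_iff by metis
qed (simp add: Ptrees_def)

lemma deg_contraction:
  assumes "I \<subseteq> {..<deg T}"
  shows "deg (contraction T I) = card I"
proof (cases T)
  case (Some t)
  then have "I \<inter> {..<nleaves t} = I" using assms by (auto simp: deg_def)
  then show ?thesis using Some deg_contr(1)[of t I] by (simp add: contraction_def)
qed (use assms in \<open>simp add: deg_def contraction_def\<close>)

lemma contraction_lessThan_deg: "T \<in> Ptrees \<Longrightarrow> contraction T {..<deg T} = T"
  by (cases T) (auto simp: contraction_def deg_def Some_in_Ptrees_iff contr_all_leaves)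

abbreviation xvar :: elt where
  "xvar \<equiv> mono (Some Lf)"

lemma tpow_xvar: "reduced t \<Longrightarrow> tpow xvar t = mono (Some t)"
proof (induction t)
  case (Nd ts)
  then have "tpow xvar (Nd ts) = omega (map mono (map Some ts))"
    by (simp cong: map_cong)
  also have "\<dots> = mono (graft (map Some ts))" by (rule omega_map_mono)
  also have "graft (map Some ts) = Some (Nd ts)"
    using Nd.prems by (cases ts rule: remdups_adj.cases) (auto simp: graft_def comp_def)
  finally show ?case .
qed simp

lemma epow_xvar: "T \<in> Ptrees \<Longrightarrow> epow xvar T = mono T"
  by (cases T) (auto simp: epow_def Some_in_Ptrees_iff tpow_xvar)

lemma finite_supp_xminus: "fin_supp (xminus a)"
proof (rule finite_subset)
  show "supp (xminus a) \<subseteq> {Some Lf, None}"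
    by (auto simp: supp_def xminus_def mono_def)
qed simp

lemma mono_eq_sum_epow_xminus:
  assumes "U \<in> Ptrees"
  shows "mono U = (\<lambda>V. \<Sum>I\<in>Pow {..<deg U}. a ^ (deg U - card I) * epow (xminus a) (contraction U I) V)"
proof -
  have "plus_const (xminus a) a = xvar" by (auto simp: plus_const_def xminus_def)
  then show ?thesis
    using epow_plus_const[OF finite_supp_xminus[of a], of a U] epow_xvar[OF assms] by simp
qed

lemma epow_xminus_eq_sum_mono:
  "epow (xminus a) T = (\<lambda>V. \<Sum>I\<in>Pow {..<deg T}. (-a) ^ (deg T - card I) * mono (contraction T I) V)"
proof -
  have "plus_const xvar (-a) = xminus a" by (auto simp: plus_const_def xminus_def)
  then show ?thesis
    using epow_plus_const[of xvar "-a" T] epow_xvar[OF contraction_in_Ptrees] by simp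
qed

lemma subset_lessThan_card_eq: "I \<subseteq> {..<n} \<Longrightarrow> n \<le> card I \<Longrightarrow> I = {..<n}"
  by (metis card_lessThan card_seteq finite_lessThan)

lemma epow_xminus_unitriangular:
  assumes T: "T \<in> Ptrees" and "deg T \<le> deg S"
  shows "epow (xminus a) T S = (if T = S then 1 else 0)"
proof -
  have "(-a) ^ (deg T - card I) * mono (contraction T I) S = (if I = {..<deg T} \<and> T = S then 1 else 0)"
    if I: "I \<in> Pow {..<deg T}" for I
  proof (cases "contraction T I = S")
    case True
    then have "card I = deg S" using deg_contraction I by auto
    then have "I = {..<deg T}" using I assms(2) subset_lessThan_card_eq by auto
    then show ?thesis using True contraction_lessThan_deg[OF T] by (simp add: mono_def)
  next
    case False
    then show ?thesis using contraction_lessThan_deg[OF T] by (auto simp: mono_def)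
  qed
  then have "epow (xminus a) T S = (\<Sum>I\<in>Pow {..<deg T}. if I = {..<deg T} \<and> T = S then 1 else 0)"
    by (simp add: epow_xminus_eq_sum_mono)
  then show ?thesis by (simp add: sum.delta')
qed

lemma epow_xminus_linear_independent:
  assumes F: "finite F" "F \<subseteq> Ptrees" and zero: "\<And>U. (\<Sum>T\<in>F. d T * epow (xminus a) T U) = 0"
  shows "\<forall>T\<in>F. d T = 0"
proof (rule ccontr)
  let ?S = "{T \<in> F. d T \<noteq> 0}"
  assume "\<not> (\<forall>T\<in>F. d T = 0)"
  then have "?S \<noteq> {}" by auto
  have "finite ?S" using F by simp
  \<comment> \<open>a nonzero coefficient of maximal degree is the only contribution at its own tree\<close>
  then have "Max (deg ` ?S) \<in> deg ` ?S"
    using \<open>?S \<noteq> {}\<close> by (intro Max_in) auto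
  then obtain T0 where T0: "T0 \<in> ?S" "deg T0 = Max (deg ` ?S)" by auto
  have max: "deg T \<le> deg T0" if "T \<in> ?S" for T
    using that T0(2) \<open>finite ?S\<close> by (simp add: Max_ge)
  have "d T * epow (xminus a) T T0 = (if T = T0 then d T0 else 0)" if "T \<in> F" for T
    using that F(2) max[of T] epow_xminus_unitriangular[of T T0 a] by (cases "d T = 0") auto
  then have "(\<Sum>T\<in>F. d T * epow (xminus a) T T0) = d T0"
    using T0 F(1) by (simp add: sum.delta' cong: sum.cong)
  then show False using zero[of T0] T0 by simp
qed

section \<open>The coefficients of a truncation in the basis (x - a)^T\<close>

lemma sum_pbinom_eq_sum_Pow:
  assumes "finite P" "contraction U ` Pow {..<deg U} \<subseteq> P"
  shows "(\<Sum>T\<in>P. of_nat (pbinom U T) * F T) = (\<Sum>I\<in>Pow {..<deg U}. (F (contraction U I) :: 'a::comm_semiring_1))"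
proof -
  have "(\<Sum>I\<in>Pow {..<deg U}. F (contraction U I)) =
      (\<Sum>T\<in>P. \<Sum>I\<in>{I \<in> Pow {..<deg U}. contraction U I = T}. F (contraction U I))"
    using assms by (intro sum.group[symmetric]) auto
  also have "\<dots> = (\<Sum>T\<in>P. of_nat (pbinom U T) * F T)"
    by (intro sum.cong refl) (simp add: pbinom_def)
  finally show ?thesis by simp
qed

lemma contraction_Pow_subset_Pn: "U \<in> Pn n \<Longrightarrow> contraction U ` Pow {..<deg U} \<subseteq> Pn n"
proof
  fix T assume U: "U \<in> Pn n" and "T \<in> contraction U ` Pow {..<deg U}"
  then obtain I where I: "I \<subseteq> {..<deg U}" "T = contraction U I" by auto
  then have "deg T \<le> deg U" using deg_contraction card_le_of_subset_lessThan by simp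
  then show "T \<in> Pn n" using U I contraction_in_Ptrees by (simp add: Pn_def)
qed

definition expansion_coeff :: "(ptree option \<Rightarrow> complex) \<Rightarrow> complex \<Rightarrow> nat \<Rightarrow> ptree option \<Rightarrow> complex" where
  "expansion_coeff \<gamma> a n T =
     (if T \<in> Pn n then \<Sum>U\<in>Pn n. \<gamma> U * of_nat (pbinom U T) * a ^ (deg U - deg T) else 0)"

lemma trunc_eq_sum_expansion_coeff:
  "trunc \<gamma> n U = (\<Sum>T\<in>Pn n. expansion_coeff \<gamma> a n T * epow (xminus a) T U)"
proof -
  have pbinom_sum: "(\<Sum>T\<in>Pn n. of_nat (pbinom U' T) * (a ^ (deg U' - deg T) * epow (xminus a) T U)) = mono U' U"
    if U': "U' \<in> Pn n" for U'
  proof -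
    have "(\<Sum>T\<in>Pn n. of_nat (pbinom U' T) * (a ^ (deg U' - deg T) * epow (xminus a) T U))
        = (\<Sum>I\<in>Pow {..<deg U'}. a ^ (deg U' - deg (contraction U' I)) * epow (xminus a) (contraction U' I) U)"
      by (rule sum_pbinom_eq_sum_Pow[OF finite_Pn contraction_Pow_subset_Pn[OF U']])
    also have "\<dots> = (\<Sum>I\<in>Pow {..<deg U'}. a ^ (deg U' - card I) * epow (xminus a) (contraction U' I) U)"
      by (intro sum.cong refl) (simp add: deg_contraction)
    also have "\<dots> = mono U' U"
      using U' Pn_subset_Ptrees by (metis fun_cong[OF mono_eq_sum_epow_xminus] subsetD)
    finally show ?thesis .
  qed
  have "(\<Sum>T\<in>Pn n. expansion_coeff \<gamma> a n T * epow (xminus a) T U)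
      = (\<Sum>T\<in>Pn n. \<Sum>U'\<in>Pn n. \<gamma> U' * (of_nat (pbinom U' T) * (a ^ (deg U' - deg T) * epow (xminus a) T U)))"
    by (simp add: expansion_coeff_def sum_distrib_right mult.assoc)
  also have "\<dots> = (\<Sum>U'\<in>Pn n. \<gamma> U' * (\<Sum>T\<in>Pn n. of_nat (pbinom U' T) * (a ^ (deg U' - deg T) * epow (xminus a) T U)))"
    by (subst sum.swap) (simp add: sum_distrib_left)
  also have "\<dots> = (\<Sum>U'\<in>Pn n. \<gamma> U' * mono U' U)"
    using pbinom_sum by simp
  also have "\<dots> = (\<Sum>U'\<in>Pn n. if U = U' then \<gamma> U else 0)"
    by (intro sum.cong refl) (simp add: mono_def)
  also have "\<dots> = trunc \<gamma> n U"
    by (simp add: trunc_def finite_Pn)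
  finally show ?thesis by simp
qed

lemma expand_coeffs_trunc: "expand_coeffs a n (trunc \<gamma> n) = expansion_coeff \<gamma> a n"
  unfolding expand_coeffs_def
proof (rule the_equality)
  show "(\<forall>T. T \<notin> Pn n \<longrightarrow> expansion_coeff \<gamma> a n T = 0) \<and>
      (\<forall>U. trunc \<gamma> n U = (\<Sum>T\<in>Pn n. expansion_coeff \<gamma> a n T * epow (xminus a) T U))"
    using trunc_eq_sum_expansion_coeff by (auto simp: expansion_coeff_def)
next
  fix c assume c: "(\<forall>T. T \<notin> Pn n \<longrightarrow> c T = 0) \<and>
      (\<forall>U. trunc \<gamma> n U = (\<Sum>T\<in>Pn n. c T * epow (xminus a) T U))"
  have "(\<Sum>T\<in>Pn n. (c T - expansion_coeff \<gamma> a n T) * epow (xminus a) T U) = 0" for U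
    using c trunc_eq_sum_expansion_coeff[of \<gamma> n U a]
    by (simp add: left_diff_distrib sum_subtractf)
  then have "\<forall>T\<in>Pn n. c T - expansion_coeff \<gamma> a n T = 0"
    by (intro epow_xminus_linear_independent finite_Pn Pn_subset_Ptrees)
  then show "c = expansion_coeff \<gamma> a n"
    using c by (auto simp: expansion_coeff_def)
qed

section \<open>Convergence\<close>

lemma sum_Pow_power_card:
  fixes s t :: "'a::comm_semiring_1"
  assumes "finite A"
  shows "(\<Sum>I\<in>Pow A. s ^ card I * t ^ (card A - card I)) = (s + t) ^ card A"
proof -
  have "(s + t) ^ card A = (\<Sum>I\<in>Pow A. (\<Prod>x\<in>I. s) * (\<Prod>x\<in>A - I. t))"
    using prod_add[OF assms, of "\<lambda>_. s" "\<lambda>_. t"] by simp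
  also have "\<dots> = (\<Sum>I\<in>Pow A. s ^ card I * t ^ (card A - card I))"
    using assms by (intro sum.cong refl) (auto simp: card_Diff_subset finite_subset)
  finally show ?thesis ..
qed

lemma sum_pbinom_le_power:
  fixes s t :: real
  assumes "finite F" "0 \<le> s" "0 \<le> t"
  shows "(\<Sum>T\<in>F. of_nat (pbinom U T) * (s ^ deg T * t ^ (deg U - deg T))) \<le> (s + t) ^ deg U"
proof -
  let ?P = "F \<union> contraction U ` Pow {..<deg U}"
  have "(\<Sum>T\<in>F. of_nat (pbinom U T) * (s ^ deg T * t ^ (deg U - deg T)))
      \<le> (\<Sum>T\<in>?P. of_nat (pbinom U T) * (s ^ deg T * t ^ (deg U - deg T)))"
    using assms by (intro sum_mono2) auto
  also have "\<dots> = (\<Sum>I\<in>Pow {..<deg U}. s ^ deg (contraction U I) * t ^ (deg U - deg (contraction U I)))"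
    using assms(1) by (intro sum_pbinom_eq_sum_Pow) auto
  also have "\<dots> = (\<Sum>I\<in>Pow {..<deg U}. s ^ card I * t ^ (card {..<deg U} - card I))"
    by (intro sum.cong refl) (simp add: deg_contraction)
  also have "\<dots> = (s + t) ^ deg U"
    by (subst sum_Pow_power_card) auto
  finally show ?thesis .
qed

lemma has_sum_sum:
  fixes f :: "'i \<Rightarrow> 'a \<Rightarrow> 'b::topological_comm_monoid_add"
  assumes "finite I" "\<And>i. i \<in> I \<Longrightarrow> (f i has_sum s i) A"
  shows "((\<lambda>x. \<Sum>i\<in>I. f i x) has_sum (\<Sum>i\<in>I. s i)) A"
  using assms by (induction I rule: finite_induct) (simp_all add: has_sum_add)

lemma tendsto_sum_Pn:
  assumes "f summable_on Ptrees"
  shows "(\<lambda>n. sum f (Pn n)) \<longlonglongrightarrow> infsum f Ptrees"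
proof -
  have "filterlim Pn (finite_subsets_at_top Ptrees) sequentially"
    unfolding filterlim_finite_subsets_at_top
  proof (intro allI impI)
    fix X assume X: "finite X \<and> X \<subseteq> Ptrees"
    have "X \<subseteq> Pn n" if "(\<Sum>T\<in>X. deg T) \<le> n" for n
      using X that member_le_sum[of _ X deg] by (fastforce simp: Pn_def)
    then show "\<forall>\<^sub>F n in sequentially. finite (Pn n) \<and> X \<subseteq> Pn n \<and> Pn n \<subseteq> Ptrees"
      unfolding eventually_sequentially using finite_Pn Pn_subset_Ptrees by blast
  qed
  moreover have "(sum f \<longlongrightarrow> infsum f Ptrees) (finite_subsets_at_top Ptrees)"
    using assms has_sum_def has_sum_infsum by blast
  ultimately show ?thesis using filterlim_compose by blast
qed

definition rad_summable :: "(ptree option \<Rightarrow> complex) \<Rightarrow> real \<Rightarrow> bool" where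
  "rad_summable \<gamma> \<rho> \<longleftrightarrow> (\<lambda>T. norm (\<gamma> T) * \<rho> ^ deg T) summable_on Ptrees"

lemma less_rad_imp_rad_summable:
  assumes "ereal x < rad \<gamma>"
  obtains \<rho> where "0 \<le> \<rho>" "rad_summable \<gamma> \<rho>" "x < \<rho>"
  using assms unfolding rad_def rad_summable_def less_Sup_iff by auto

lemma rad_summable_imp_le_rad:
  assumes "0 \<le> \<rho>" "rad_summable \<gamma> \<rho>"
  shows "ereal \<rho> \<le> rad \<gamma>"
  unfolding rad_def using assms by (intro Sup_upper) (auto simp: rad_summable_def)

lemma rad_summable_mono:
  assumes "rad_summable \<gamma> \<rho>'" "0 \<le> \<rho>" "\<rho> \<le> \<rho>'"
  shows "rad_summable \<gamma> \<rho>"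
  using assms(1) unfolding rad_summable_def
proof (rule summable_on_comparison_test)
  fix T
  show "norm (\<gamma> T) * \<rho> ^ deg T \<le> norm (\<gamma> T) * \<rho>' ^ deg T"
    using assms by (simp add: mult_left_mono power_mono)
  show "0 \<le> norm (\<gamma> T) * \<rho> ^ deg T"
    using assms by simp
qed

lemma rad_nonneg: "0 \<le> rad \<gamma>"
proof -
  have "(\<lambda>T. norm (\<gamma> T) * 0 ^ deg T) summable_on Ptrees \<longleftrightarrow> (\<lambda>T. norm (\<gamma> T) * 0 ^ deg T) summable_on {None}"
  proof (rule summable_on_cong_neutral)
    fix T assume "T \<in> Ptrees - {None}"
    then have "deg T \<noteq> 0" using deg_ge_1[of T] by simp
    then show "norm (\<gamma> T) * 0 ^ deg T = 0" by simp
  qed (auto simp: Ptrees_def)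
  then have "rad_summable \<gamma> 0"
    unfolding rad_summable_def by simp
  then show ?thesis using rad_summable_imp_le_rad[of 0] by (simp add: zero_ereal_def)
qed

lemma le_rad_if_rad_summable:
  assumes "\<And>\<rho>. 0 < \<rho> \<Longrightarrow> ereal \<rho> < X \<Longrightarrow> rad_summable \<gamma> \<rho>"
  shows "X \<le> rad \<gamma>"
proof (rule dense_le)
  fix q assume q: "q < X"
  show "q \<le> rad \<gamma>"
  proof (cases "q \<le> 0")
    case True
    then show ?thesis using rad_nonneg order_trans by blast
  next
    case False
    then obtain \<rho> where "q = ereal \<rho>" "0 < \<rho>"
      using q by (cases q) auto
    then show ?thesis using assms q rad_summable_imp_le_rad by simp
  qed
qed

lemma norm_gamma_at_term:
  fixes \<gamma> :: "ptree option \<Rightarrow> complex" and a :: complex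
  shows "norm (\<gamma> U * of_nat (pbinom U T) * a ^ (deg U - deg T)) =
     norm (\<gamma> U) * of_nat (pbinom U T) * norm a ^ (deg U - deg T)"
  by (simp only: norm_mult norm_power norm_of_nat)

lemma summable_on_gamma_at_terms:
  assumes "ereal (norm a) < rad \<gamma>"
  shows "(\<lambda>U. \<gamma> U * of_nat (pbinom U T) * a ^ (deg U - deg T)) summable_on Ptrees"
proof -
  obtain \<rho> where \<rho>: "rad_summable \<gamma> \<rho>" "norm a < \<rho>"
    using assms less_rad_imp_rad_summable by blast
  define e where "e = \<rho> - norm a"
  have e: "0 < e" "\<rho> = e + norm a" using \<rho>(2) by (auto simp: e_def)
  have "(\<lambda>U. norm (\<gamma> U * of_nat (pbinom U T) * a ^ (deg U - deg T))) summable_on Ptrees"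
  proof (rule summable_on_comparison_test)
    show "(\<lambda>U. norm (\<gamma> U) * \<rho> ^ deg U * (1 / e ^ deg T)) summable_on Ptrees"
      using \<rho>(1) unfolding rad_summable_def by (rule summable_on_cmult_left)
  next
    fix U
    \<comment> \<open>keep only the summand T of the binomial bound for (e + |a|)^deg U\<close>
    have "of_nat (pbinom U T) * (e ^ deg T * norm a ^ (deg U - deg T)) \<le> \<rho> ^ deg U"
      using sum_pbinom_le_power[of "{T}" e "norm a" U] e by simp
    then have "of_nat (pbinom U T) * norm a ^ (deg U - deg T) \<le> \<rho> ^ deg U / e ^ deg T"
      using e by (simp add: field_simps)
    then have "norm (\<gamma> U) * (of_nat (pbinom U T) * norm a ^ (deg U - deg T)) \<le> norm (\<gamma> U) * (\<rho> ^ deg U / e ^ deg T)"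
      by (intro mult_left_mono) auto
    then show "norm (\<gamma> U * of_nat (pbinom U T) * a ^ (deg U - deg T)) \<le> norm (\<gamma> U) * \<rho> ^ deg U * (1 / e ^ deg T)"
      unfolding norm_gamma_at_term by (simp add: mult.assoc)
  qed simp
  then show ?thesis by (rule summable_on_iff_abs_summable_on_complex[THEN iffD2])
qed

lemma summable_on_norm_gamma_at_terms:
  fixes \<gamma> :: "ptree option \<Rightarrow> complex" and a :: complex
  assumes "ereal (norm a) < rad \<gamma>"
  shows "(\<lambda>U. norm (\<gamma> U) * of_nat (pbinom U T) * norm a ^ (deg U - deg T)) summable_on Ptrees"
proof -
  have "(\<lambda>U. norm (\<gamma> U * of_nat (pbinom U T) * a ^ (deg U - deg T))) summable_on Ptrees"
    using summable_on_gamma_at_terms[OF assms]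
    by (rule summable_on_iff_abs_summable_on_complex[THEN iffD1])
  then show ?thesis unfolding norm_gamma_at_term .
qed

lemma norm_gamma_at_le:
  assumes "ereal (norm a) < rad \<gamma>"
  shows "norm (gamma_at \<gamma> a T) \<le> (\<Sum>\<^sub>\<infinity>U\<in>Ptrees. norm (\<gamma> U) * of_nat (pbinom U T) * norm a ^ (deg U - deg T))"
proof -
  have "(\<lambda>U. norm (\<gamma> U * of_nat (pbinom U T) * a ^ (deg U - deg T))) summable_on Ptrees"
    using summable_on_norm_gamma_at_terms[OF assms] unfolding norm_gamma_at_term .
  from norm_infsum_bound[OF this] show ?thesis
    unfolding gamma_at_def norm_gamma_at_term .
qed

lemma sum_norm_gamma_at_le:
  assumes \<gamma>: "rad_summable \<gamma> (\<rho> + norm a)" and \<rho>: "0 < \<rho>" and F: "finite F"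
  shows "(\<Sum>T\<in>F. norm (gamma_at \<gamma> a T) * \<rho> ^ deg T) \<le> (\<Sum>\<^sub>\<infinity>U\<in>Ptrees. norm (\<gamma> U) * (\<rho> + norm a) ^ deg U)"
proof -
  let ?g = "\<lambda>T U. norm (\<gamma> U) * of_nat (pbinom U T) * norm a ^ (deg U - deg T)"
  have "ereal (norm a) < ereal (\<rho> + norm a)" using \<rho> by simp
  also have "\<dots> \<le> rad \<gamma>" using rad_summable_imp_le_rad[OF _ \<gamma>] \<rho> by simp
  finally have a: "ereal (norm a) < rad \<gamma>" .
  have sum_g: "((\<lambda>U. \<Sum>T\<in>F. ?g T U * \<rho> ^ deg T) has_sum (\<Sum>T\<in>F. infsum (?g T) Ptrees * \<rho> ^ deg T)) Ptrees"
    using F by (rule has_sum_sum)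
      (use summable_on_norm_gamma_at_terms[OF a] in \<open>auto intro: has_sum_cmult_left\<close>)
  have "(\<Sum>T\<in>F. norm (gamma_at \<gamma> a T) * \<rho> ^ deg T) \<le> (\<Sum>T\<in>F. infsum (?g T) Ptrees * \<rho> ^ deg T)"
    using norm_gamma_at_le[OF a] \<rho> by (intro sum_mono mult_right_mono) auto
  also have "\<dots> = (\<Sum>\<^sub>\<infinity>U\<in>Ptrees. \<Sum>T\<in>F. ?g T U * \<rho> ^ deg T)"
    using sum_g by (simp add: infsumI)
  also have "\<dots> \<le> (\<Sum>\<^sub>\<infinity>U\<in>Ptrees. norm (\<gamma> U) * (\<rho> + norm a) ^ deg U)"
  proof (rule infsum_mono)
    show "(\<lambda>U. \<Sum>T\<in>F. ?g T U * \<rho> ^ deg T) summable_on Ptrees"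
      using sum_g by (rule has_sum_imp_summable)
    show "(\<lambda>U. norm (\<gamma> U) * (\<rho> + norm a) ^ deg U) summable_on Ptrees"
      using \<gamma> by (simp add: rad_summable_def)
  next
    fix U
    have "(\<Sum>T\<in>F. ?g T U * \<rho> ^ deg T)
        = norm (\<gamma> U) * (\<Sum>T\<in>F. of_nat (pbinom U T) * (\<rho> ^ deg T * norm a ^ (deg U - deg T)))"
      by (simp add: sum_distrib_left mult_ac)
    also have "\<dots> \<le> norm (\<gamma> U) * (\<rho> + norm a) ^ deg U"
      using sum_pbinom_le_power[OF F, of \<rho> "norm a" U] \<rho> by (intro mult_left_mono) auto
    finally show "(\<Sum>T\<in>F. ?g T U * \<rho> ^ deg T) \<le> norm (\<gamma> U) * (\<rho> + norm a) ^ deg U" .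
  qed
  finally show ?thesis .
qed

lemma rad_summable_gamma_at:
  assumes "rad_summable \<gamma> (\<rho> + norm a)" "0 < \<rho>"
  shows "rad_summable (gamma_at \<gamma> a) \<rho>"
  unfolding rad_summable_def
proof (rule nonneg_bdd_above_summable_on)
  show "bdd_above (sum (\<lambda>T. norm (gamma_at \<gamma> a T) * \<rho> ^ deg T) ` {F. F \<subseteq> Ptrees \<and> finite F})"
    using sum_norm_gamma_at_le[OF assms] by (intro bdd_aboveI2) auto
qed (use assms(2) in simp)

lemma rad_gamma_at_ge:
  assumes "ereal (norm a) < rad \<gamma>"
  shows "rad \<gamma> - ereal (norm a) \<le> rad (gamma_at \<gamma> a)"
proof (rule le_rad_if_rad_summable)
  fix \<rho> :: real assume \<rho>: "0 < \<rho>" "ereal \<rho> < rad \<gamma> - ereal (norm a)"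
  then have "ereal \<rho> + ereal (norm a) < rad \<gamma>"
    by (simp add: ereal_less_minus_iff)
  then have "ereal (\<rho> + norm a) < rad \<gamma>" by simp
  then obtain \<rho>' where \<rho>': "rad_summable \<gamma> \<rho>'" "\<rho> + norm a < \<rho>'"
    using less_rad_imp_rad_summable by blast
  have "rad_summable \<gamma> (\<rho> + norm a)"
    using rad_summable_mono[OF \<rho>'(1)] \<rho>(1) \<rho>'(2) by simp
  then show "rad_summable (gamma_at \<gamma> a) \<rho>"
    using \<rho>(1) by (rule rad_summable_gamma_at)
qed

lemma tendsto_expand_coeffs_trunc:
  assumes "ereal (norm a) < rad \<gamma>" "T \<in> Ptrees"
  shows "(\<lambda>n. expand_coeffs a n (trunc \<gamma> n) T) \<longlonglongrightarrow> gamma_at \<gamma> a T"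
proof -
  let ?f = "\<lambda>U. \<gamma> U * of_nat (pbinom U T) * a ^ (deg U - deg T)"
  have "(\<lambda>n. sum ?f (Pn n)) \<longlonglongrightarrow> gamma_at \<gamma> a T"
    unfolding gamma_at_def using summable_on_gamma_at_terms[OF assms(1)] by (rule tendsto_sum_Pn)
  moreover have "\<forall>\<^sub>F n in sequentially. sum ?f (Pn n) = expand_coeffs a n (trunc \<gamma> n) T"
    unfolding eventually_sequentially expand_coeffs_trunc expansion_coeff_def
    using assms(2) by (auto simp: Pn_def)
  ultimately show ?thesis by (rule Lim_transform_eventually)
qed

lemma pbinom_None:
  assumes "U \<in> Ptrees"
  shows "pbinom U None = 1"
proof -
  have "contraction U I = None \<longleftrightarrow> I = {}" if I: "I \<subseteq> {..<deg U}" for I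
  proof -
    have "finite I" using I finite_subset by blast
    moreover have "contraction U I = None \<longleftrightarrow> deg (contraction U I) = 0"
      using deg_ge_1[OF contraction_in_Ptrees] by (fastforce simp: deg_def)
    ultimately show ?thesis using deg_contraction[OF I] by simp
  qed
  then have "{I. I \<subseteq> {..<deg U} \<and> contraction U I = None} = {{}}" by auto
  then show ?thesis by (simp add: pbinom_def)
qed

lemma pbinom_Some_Lf:
  assumes "U \<in> Ptrees"
  shows "pbinom U (Some Lf) = deg U"
proof -
  have "contraction U I = Some Lf \<longleftrightarrow> card I = 1" if "I \<subseteq> {..<deg U}" for I
    using deg_eq_1_iff[OF contraction_in_Ptrees, of U I] deg_contraction[OF that] by simp
  then have "{I. I \<subseteq> {..<deg U} \<and> contraction U I = Some Lf} = {I. I \<subseteq> {..<deg U} \<and> card I = 1}"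
    by auto
  then show ?thesis by (simp add: pbinom_def n_subsets)
qed

lemma gamma_at_None: "gamma_at \<gamma> a None = (\<Sum>\<^sub>\<infinity>U\<in>Ptrees. \<gamma> U * a ^ deg U)"
  unfolding gamma_at_def by (intro infsum_cong) (simp add: pbinom_None deg_def)

lemma gamma_at_Some_Lf:
  "gamma_at \<gamma> a (Some Lf) = (\<Sum>\<^sub>\<infinity>U\<in>{U\<in>Ptrees. 1 \<le> deg U}. \<gamma> U * of_nat (deg U) * a ^ (deg U - 1))"
  unfolding gamma_at_def by (rule infsum_cong_neutral) (auto simp: pbinom_Some_Lf deg_def)

theorem proposition2p2:
  fixes \<gamma> :: "ptree option \<Rightarrow> complex" and a :: complex
  assumes "0 < rad \<gamma>" and "ereal (norm a) < rad \<gamma>"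
  shows "(\<forall>T\<in>Ptrees.
            (\<lambda>U. \<gamma> U * of_nat (pbinom U T) * a ^ (deg U - deg T)) summable_on Ptrees \<and>
            (\<lambda>n. expand_coeffs a n (trunc \<gamma> n) T) \<longlonglongrightarrow> gamma_at \<gamma> a T)
       \<and> rad (gamma_at \<gamma> a) \<ge> rad \<gamma> - ereal (norm a)
       \<and> gamma_at \<gamma> a None = (\<Sum>\<^sub>\<infinity>U\<in>Ptrees. \<gamma> U * a ^ deg U)
       \<and> gamma_at \<gamma> a (Some Lf) =
           (\<Sum>\<^sub>\<infinity>U\<in>{U\<in>Ptrees. 1 \<le> deg U}. \<gamma> U * of_nat (deg U) * a ^ (deg U - 1))"
proof (intro conjI ballI)
  fix T assume "T \<in> Ptrees"
  show "(\<lambda>U. \<gamma> U * of_nat (pbinom U T) * a ^ (deg U - deg T)) summable_on Ptrees"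
    using assms(2) by (rule summable_on_gamma_at_terms)
  show "(\<lambda>n. expand_coeffs a n (trunc \<gamma> n) T) \<longlonglongrightarrow> gamma_at \<gamma> a T"
    using assms(2) \<open>T \<in> Ptrees\<close> by (rule tendsto_expand_coeffs_trunc)
qed (simp_all add: rad_gamma_at_ge[OF assms(2)] gamma_at_None gamma_at_Some_Lf)

end
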